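(* For any $d\geq 4$, there is no maximally $\psi$-epistemic ontological model that reproduces the quantum predictions for a quantum system with Hilbert space $\mathbb{C}^d$.
   Context: An ontological model for a quantum system with Hilbert space $\mathbb{C}^d$ consists of: a measure space $\Lambda$ of "ontic states" (with measure $\mathrm{d}\lambda$); for every pure state $\ket{\psi}$, a probability density $\mu_\psi$ on $\Lambda$; and for every projective measurement $M$ with outcomes $f$ (corresponding to orthogonal projectors $P_f$ summing to the identity), response functions $\xi_M(f|\lambda)\geq 0$ with $\sum_f \xi_M(f|\lambda)=1$ for all $\lambda$. The model reproduces the quantum predictions if $\int_\Lambda \xi_M(f|\lambda)\mu_\psi(\lambda)\,\mathrm{d}\lambda = \bra{\psi}P_f\ket{\psi}$ for all pure states $\ket{\psi}$, all projective measurements $M$ and outcomes $f$. The classical overlap of densities $p,q$ is $\omega_C(p,q)=\int\min\{p(x),q(x)\}\,\mathrm{d}x$; the quantum overlap of pure states is $\omega_Q(\psi,\phi)=1-\sqrt{1-|\braket{\psi|\phi}|^2}$. The model is maximally $\psi$-epistemic if $\omega_C(\mu_\psi,\mu_\phi)=\omega_Q(\psi,\phi)$ for all pairs of pure states $\ket{\psi},\ket{\phi}$. *)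

theory Defs
  imports "HOL-Analysis.Analysis"
begin

text \<open>Pure states of C^d are represented by unit vectors in complex^'n, with d = CARD('n).\<close>

definition qinner :: "complex ^ 'n \<Rightarrow> complex ^ 'n \<Rightarrow> complex" where
  "qinner \<psi> \<phi> = (\<Sum>i\<in>UNIV. cnj (\<psi> $ i) * \<phi> $ i)"

definition pure_state :: "complex ^ 'n \<Rightarrow> bool" where
  "pure_state \<psi> \<longleftrightarrow> qinner \<psi> \<psi> = 1"

definition adjoint_mat :: "complex ^ 'n ^ 'n \<Rightarrow> complex ^ 'n ^ 'n" where
  "adjoint_mat P = (\<chi> i j. cnj (P $ j $ i))"

definition orth_projector :: "complex ^ 'n ^ 'n \<Rightarrow> bool" where
  "orth_projector P \<longleftrightarrow> P ** P = P \<and> adjoint_mat P = P"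

text \<open>A projective measurement: a finite set of orthogonal projectors, pairwise orthogonal,
  summing to the identity. Its outcomes are identified with its projectors.\<close>
definition projective_measurement :: "(complex ^ 'n ^ 'n) set \<Rightarrow> bool" where
  "projective_measurement M \<longleftrightarrow> finite M \<and> (\<forall>P\<in>M. orth_projector P)
     \<and> (\<forall>P\<in>M. \<forall>Q\<in>M. P \<noteq> Q \<longrightarrow> P ** Q = 0)
     \<and> (\<Sum>P\<in>M. P) = mat 1"

text \<open>Ontological model on the measure space L (the ontic states with measure d lambda):
  densities mu psi, response functions xi M P.\<close>
definition ontological_model ::
  "'l measure \<Rightarrow> (complex ^ 'n \<Rightarrow> 'l \<Rightarrow> real)
     \<Rightarrow> ((complex ^ 'n ^ 'n) set \<Rightarrow> complex ^ 'n ^ 'n \<Rightarrow> 'l \<Rightarrow> real) \<Rightarrow> bool" where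
  "ontological_model L \<mu> \<xi> \<longleftrightarrow>
     (\<forall>\<psi>. pure_state \<psi> \<longrightarrow>
        \<mu> \<psi> \<in> borel_measurable L \<and> (\<forall>x\<in>space L. 0 \<le> \<mu> \<psi> x)
        \<and> integrable L (\<mu> \<psi>) \<and> integral\<^sup>L L (\<mu> \<psi>) = 1)
   \<and> (\<forall>M. projective_measurement M \<longrightarrow>
        (\<forall>P\<in>M. \<xi> M P \<in> borel_measurable L \<and> (\<forall>x\<in>space L. 0 \<le> \<xi> M P x))
        \<and> (\<forall>x\<in>space L. (\<Sum>P\<in>M. \<xi> M P x) = 1))"

definition reproduces_quantum ::
  "'l measure \<Rightarrow> (complex ^ 'n \<Rightarrow> 'l \<Rightarrow> real)
     \<Rightarrow> ((complex ^ 'n ^ 'n) set \<Rightarrow> complex ^ 'n ^ 'n \<Rightarrow> 'l \<Rightarrow> real) \<Rightarrow> bool" where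
  "reproduces_quantum L \<mu> \<xi> \<longleftrightarrow>
     (\<forall>\<psi> M. pure_state \<psi> \<longrightarrow> projective_measurement M \<longrightarrow>
        (\<forall>P\<in>M. integral\<^sup>L L (\<lambda>x. \<xi> M P x * \<mu> \<psi> x) = Re (qinner \<psi> (P *v \<psi>))))"

definition classical_overlap :: "'l measure \<Rightarrow> ('l \<Rightarrow> real) \<Rightarrow> ('l \<Rightarrow> real) \<Rightarrow> real" where
  "classical_overlap L p q = integral\<^sup>L L (\<lambda>x. min (p x) (q x))"

definition quantum_overlap :: "complex ^ 'n \<Rightarrow> complex ^ 'n \<Rightarrow> real" where
  "quantum_overlap \<psi> \<phi> = 1 - sqrt (1 - (cmod (qinner \<psi> \<phi>))\<^sup>2)"

definition maximally_psi_epistemic ::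
  "'l measure \<Rightarrow> (complex ^ 'n \<Rightarrow> 'l \<Rightarrow> real) \<Rightarrow> bool" where
  "maximally_psi_epistemic L \<mu> \<longleftrightarrow>
     (\<forall>\<psi> \<phi>. pure_state \<psi> \<longrightarrow> pure_state \<phi> \<longrightarrow>
        classical_overlap L (\<mu> \<psi>) (\<mu> \<phi>) = quantum_overlap \<psi> \<phi>)"

end

theory Submission
  imports Defs
begin

text \<open>Let \<open>\<psi> = (1,1,1,-1)/2\<close> and consider the eight states formed by the standard basis and the
  normalised Hadamard vectors of a four-dimensional subspace; each of them has squared overlap
  \<open>1/4\<close> with \<open>\<psi>\<close>, so maximal \<open>\<psi>\<close>-epistemicity gives \<open>\<omega>\<^sub>C(\<mu>\<^sub>\<psi>, \<mu>\<^sub>\<phi>) = 1 - \<surd>3/2\<close> for each.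
  For any two of them, \<open>\<phi>\<close> and \<open>\<phi>'\<close>, the densities \<open>\<mu>\<^sub>\<psi>, \<mu>\<^sub>\<phi>, \<mu>\<^sub>\<phi>'\<close> have no common
  support: either \<open>\<phi> \<bottom> \<phi>'\<close>, and then \<open>\<omega>\<^sub>C(\<mu>\<^sub>\<phi>, \<mu>\<^sub>\<phi>') = 0\<close>, or some projective measurement
  antidistinguishes \<open>\<psi>, \<phi>, \<phi>'\<close>, i.e. each of its outcomes has probability zero for one of
  them, which a model reproducing the quantum predictions can only achieve if
  \<open>min(\<mu>\<^sub>\<psi>, \<mu>\<^sub>\<phi>, \<mu>\<^sub>\<phi>') = 0\<close> almost everywhere. So the eight functions \<open>min(\<mu>\<^sub>\<psi>, \<mu>\<^sub>\<phi>)\<close> are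
  essentially disjoint pieces of \<open>\<mu>\<^sub>\<psi>\<close>, yet their total mass \<open>8(1 - \<surd>3/2)\<close> exceeds 1.\<close>

definition born_prob :: "complex ^ 'n \<Rightarrow> complex ^ 'n ^ 'n \<Rightarrow> real" where
  "born_prob \<psi> P = Re (qinner \<psi> (P *v \<psi>))"

definition antidistinguishes ::
  "(complex ^ 'n ^ 'n) set \<Rightarrow> complex ^ 'n \<Rightarrow> complex ^ 'n \<Rightarrow> complex ^ 'n \<Rightarrow> bool" where
  "antidistinguishes M \<psi>1 \<psi>2 \<psi>3 \<longleftrightarrow>
     (\<forall>P\<in>M. born_prob \<psi>1 P = 0 \<or> born_prob \<psi>2 P = 0 \<or> born_prob \<psi>3 P = 0)"

lemma response_le_one:
  assumes "ontological_model L \<mu> \<xi>" "projective_measurement M" "P \<in> M" "x \<in> space L"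
  shows "\<xi> M P x \<le> 1"
proof -
  have "\<xi> M P x \<le> (\<Sum>Q\<in>M. \<xi> M Q x)"
    using assms by (intro member_le_sum) (auto simp: ontological_model_def projective_measurement_def)
  also have "\<dots> = 1"
    using assms by (auto simp: ontological_model_def)
  finally show ?thesis .
qed

lemma AE_response_density_zero:
  assumes om: "ontological_model L \<mu> \<xi>" and rq: "reproduces_quantum L \<mu> \<xi>"
    and M: "projective_measurement M" "P \<in> M" and \<psi>: "pure_state \<psi>"
    and zero: "born_prob \<psi> P = 0"
  shows "AE x in L. \<xi> M P x * \<mu> \<psi> x = 0"
proof -
  have \<mu>: "\<mu> \<psi> \<in> borel_measurable L" "\<forall>x\<in>space L. 0 \<le> \<mu> \<psi> x" "integrable L (\<mu> \<psi>)"
    using om \<psi> by (auto simp: ontological_model_def)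
  have \<xi>: "\<xi> M P \<in> borel_measurable L" "\<forall>x\<in>space L. 0 \<le> \<xi> M P x"
    using om M by (auto simp: ontological_model_def)
  have "integrable L (\<lambda>x. \<xi> M P x * \<mu> \<psi> x)"
  proof (rule Bochner_Integration.integrable_bound[OF \<mu>(3)])
    show "(\<lambda>x. \<xi> M P x * \<mu> \<psi> x) \<in> borel_measurable L"
      using \<mu> \<xi> by measurable
    show "AE x in L. norm (\<xi> M P x * \<mu> \<psi> x) \<le> norm (\<mu> \<psi> x)"
      using \<mu> \<xi> response_le_one[OF om M]
      by (intro AE_I2) (simp add: abs_mult mult_left_le_one_le)
  qed
  moreover have "integral\<^sup>L L (\<lambda>x. \<xi> M P x * \<mu> \<psi> x) = 0"
    using rq \<psi> M zero by (simp add: reproduces_quantum_def born_prob_def)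
  ultimately show ?thesis
    using \<mu> \<xi> by (subst (asm) integral_nonneg_eq_0_iff_AE) auto
qed

lemma AE_min3_density_zero_if_antidistinguishes:
  assumes om: "ontological_model L \<mu> \<xi>" and rq: "reproduces_quantum L \<mu> \<xi>"
    and M: "projective_measurement M" and anti: "antidistinguishes M \<psi>1 \<psi>2 \<psi>3"
    and pure: "pure_state \<psi>1" "pure_state \<psi>2" "pure_state \<psi>3"
  shows "AE x in L. min (\<mu> \<psi>1 x) (min (\<mu> \<psi>2 x) (\<mu> \<psi>3 x)) = 0"
proof -
  let ?m = "\<lambda>x. min (\<mu> \<psi>1 x) (min (\<mu> \<psi>2 x) (\<mu> \<psi>3 x))"
  have "AE x in L. \<xi> M P x * ?m x = 0" if P: "P \<in> M" for P
  proof -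
    have "AE x in L. born_prob \<psi> P = 0 \<longrightarrow> \<xi> M P x * \<mu> \<psi> x = 0" if "pure_state \<psi>" for \<psi>
      using AE_response_density_zero[OF om rq M P that] by (rule AE_impI)
    then have "AE x in L. (born_prob \<psi>1 P = 0 \<longrightarrow> \<xi> M P x * \<mu> \<psi>1 x = 0)
        \<and> (born_prob \<psi>2 P = 0 \<longrightarrow> \<xi> M P x * \<mu> \<psi>2 x = 0)
        \<and> (born_prob \<psi>3 P = 0 \<longrightarrow> \<xi> M P x * \<mu> \<psi>3 x = 0)"
      using pure by simp
    moreover have "AE x in L. 0 \<le> \<xi> M P x \<and> 0 \<le> \<mu> \<psi>1 x \<and> 0 \<le> \<mu> \<psi>2 x \<and> 0 \<le> \<mu> \<psi>3 x"
      using om M P pure by (intro AE_I2) (auto simp: ontological_model_def)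
    ultimately show ?thesis
      by eventually_elim (use anti P in \<open>auto simp: antidistinguishes_def min_def\<close>)
  qed
  then have "AE x in L. \<forall>P\<in>M. \<xi> M P x * ?m x = 0"
    using M by (subst eventually_ball_finite) (auto simp: projective_measurement_def)
  then show ?thesis
    using AE_space
  proof eventually_elim
    case (elim x)
    have "?m x = (\<Sum>P\<in>M. \<xi> M P x) * ?m x"
      using om M elim by (simp add: ontological_model_def)
    also have "\<dots> = 0"
      using elim by auto
    finally show ?case .
  qed
qed

lemma AE_min_density_zero_if_orthogonal:
  assumes om: "ontological_model L \<mu> \<xi>" and me: "maximally_psi_epistemic L \<mu>"
    and pure: "pure_state \<psi>" "pure_state \<phi>" and orth: "qinner \<psi> \<phi> = 0"
  shows "AE x in L. min (\<mu> \<psi> x) (\<mu> \<phi> x) = 0"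
proof -
  have "integral\<^sup>L L (\<lambda>x. min (\<mu> \<psi> x) (\<mu> \<phi> x)) = 0"
    using me pure orth
    by (simp add: maximally_psi_epistemic_def classical_overlap_def quantum_overlap_def)
  then show ?thesis
    using om pure by (subst (asm) integral_nonneg_eq_0_iff_AE) (auto simp: ontological_model_def)
qed

lemma sum_min_le_if_min3_zero:
  fixes a :: real and b :: "'i \<Rightarrow> real"
  assumes "finite I" "0 \<le> a" "\<And>i. i \<in> I \<Longrightarrow> 0 \<le> b i"
    and zero: "\<And>i j. i \<in> I \<Longrightarrow> j \<in> I \<Longrightarrow> i \<noteq> j \<Longrightarrow> min a (min (b i) (b j)) = 0"
  shows "(\<Sum>i\<in>I. min a (b i)) \<le> a"
proof (cases "\<exists>i\<in>I. 0 < min a (b i)")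
  case True
  then obtain i where i: "i \<in> I" "0 < min a (b i)" by blast
  have "min a (b j) = 0" if "j \<in> I - {i}" for j
    using zero[of i j] i that assms(3)[of j] by (auto simp: min_def split: if_splits)
  then have "(\<Sum>i\<in>I. min a (b i)) = min a (b i)"
    using i \<open>finite I\<close> by (simp add: sum.remove)
  then show ?thesis by simp
next
  case False
  then have "(\<Sum>i\<in>I. min a (b i)) = 0"
    using assms(2,3) by (intro sum.neutral) (force simp: not_less min_def)
  then show ?thesis using assms(2) by simp
qed

lemma sum_classical_overlap_le_one:
  fixes \<phi> :: "'i \<Rightarrow> complex ^ 'n"
  assumes om: "ontological_model L \<mu> \<xi>" and \<psi>: "pure_state \<psi>"
    and I: "finite I" "\<And>i. i \<in> I \<Longrightarrow> pure_state (\<phi> i)"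
    and zero: "\<And>i j. i \<in> I \<Longrightarrow> j \<in> I \<Longrightarrow> i \<noteq> j \<Longrightarrow>
      AE x in L. min (\<mu> \<psi> x) (min (\<mu> (\<phi> i) x) (\<mu> (\<phi> j) x)) = 0"
  shows "(\<Sum>i\<in>I. classical_overlap L (\<mu> \<psi>) (\<mu> (\<phi> i))) \<le> 1"
proof -
  have int\<psi>: "integrable L (\<mu> \<psi>)" "integral\<^sup>L L (\<mu> \<psi>) = 1"
    using om \<psi> by (auto simp: ontological_model_def)
  have int: "integrable L (\<lambda>x. min (\<mu> \<psi> x) (\<mu> (\<phi> i) x))" if "i \<in> I" for i
    using om \<psi> I that by (auto simp: ontological_model_def)
  have "AE x in L. \<forall>(i, j)\<in>I \<times> I. i \<noteq> j \<longrightarrow>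
      min (\<mu> \<psi> x) (min (\<mu> (\<phi> i) x) (\<mu> (\<phi> j) x)) = 0"
    using I by (subst eventually_ball_finite) (auto intro!: zero)
  then have bound: "AE x in L. (\<Sum>i\<in>I. min (\<mu> \<psi> x) (\<mu> (\<phi> i) x)) \<le> \<mu> \<psi> x"
    using AE_space
  proof eventually_elim
    case (elim x)
    then show ?case
      using om \<psi> I by (intro sum_min_le_if_min3_zero) (auto simp: ontological_model_def)
  qed
  have "(\<Sum>i\<in>I. classical_overlap L (\<mu> \<psi>) (\<mu> (\<phi> i)))
      = integral\<^sup>L L (\<lambda>x. \<Sum>i\<in>I. min (\<mu> \<psi> x) (\<mu> (\<phi> i) x))"
    unfolding classical_overlap_def using int by (simp add: Bochner_Integration.integral_sum)
  also have "\<dots> \<le> integral\<^sup>L L (\<mu> \<psi>)"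
    using int int\<psi> bound by (intro integral_mono_AE) auto
  finally show ?thesis
    using int\<psi> by simp
qed

definition outer :: "complex ^ 'n \<Rightarrow> complex ^ 'n \<Rightarrow> complex ^ 'n ^ 'n" where
  "outer u v = (\<chi> i j. u $ i * cnj (v $ j))"

lemma qinner_diff_right: "qinner \<psi> (x - y) = qinner \<psi> x - qinner \<psi> y"
  by (simp add: qinner_def algebra_simps sum_subtractf)

lemma qinner_scale_right: "qinner \<psi> (c *s x) = c * qinner \<psi> x"
  by (simp add: qinner_def sum_distrib_left mult_ac)

lemma qinner_sum_right: "qinner \<psi> (\<Sum>i\<in>I. x i) = (\<Sum>i\<in>I. qinner \<psi> (x i))"
  by (simp add: qinner_def sum_distrib_left sum.swap[of _ I])

lemma qinner_commute: "qinner \<psi> \<phi> = cnj (qinner \<phi> \<psi>)"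
  by (simp add: qinner_def mult.commute)

lemma qinner_zero_left [simp]: "qinner 0 \<phi> = 0"
  by (simp add: qinner_def)

lemma matrix_mult_sum_left:
  "(\<Sum>i\<in>I. A i) ** (B :: 'a::comm_ring_1 ^ 'n ^ 'n) = (\<Sum>i\<in>I. A i ** B)"
  by (induction I rule: infinite_finite_induct)
     (simp_all add: matrix_matrix_mult_def vec_eq_iff sum.distrib algebra_simps)

lemma matrix_mult_sum_right:
  "(B :: 'a::comm_ring_1 ^ 'n ^ 'n) ** (\<Sum>i\<in>I. A i) = (\<Sum>i\<in>I. B ** A i)"
  by (induction I rule: infinite_finite_induct) (simp_all add: matrix_add_ldistrib)

lemma matrix_mult_diff_left: "((A :: 'a::comm_ring_1 ^ 'n ^ 'n) - B) ** C = A ** C - B ** C"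
  by (simp add: matrix_matrix_mult_def vec_eq_iff sum_subtractf algebra_simps)

lemma matrix_mult_diff_right: "(C :: 'a::comm_ring_1 ^ 'n ^ 'n) ** (A - B) = C ** A - C ** B"
  by (simp add: matrix_matrix_mult_def vec_eq_iff sum_subtractf algebra_simps)

lemma matrix_vector_mult_sum_left:
  "(\<Sum>i\<in>I. A i) *v (x :: 'a::comm_ring_1 ^ 'n) = (\<Sum>i\<in>I. A i *v x)"
  by (induction I rule: infinite_finite_induct) (simp_all add: matrix_vector_mult_add_rdistrib)

lemma outer_zero_left [simp]: "outer 0 v = 0"
  by (simp add: outer_def vec_eq_iff)

lemma outer_mult: "outer u v ** outer w z = outer (qinner v w *s u) z"
  by (simp add: outer_def matrix_matrix_mult_def qinner_def vec_eq_iff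
      sum_distrib_left sum_distrib_right mult_ac)

lemma outer_mult_vector: "outer u v *v w = qinner v w *s u"
  by (simp add: outer_def matrix_vector_mult_def qinner_def vec_eq_iff sum_distrib_left mult_ac)

lemma adjoint_outer_self: "adjoint_mat (outer u u) = outer u u"
  by (simp add: adjoint_mat_def outer_def vec_eq_iff mult.commute)

lemma adjoint_mat_diff: "adjoint_mat (A - B) = adjoint_mat A - adjoint_mat B"
  by (simp add: adjoint_mat_def vec_eq_iff)

lemma adjoint_mat_sum: "adjoint_mat (\<Sum>i\<in>I. A i) = (\<Sum>i\<in>I. adjoint_mat (A i))"
  by (simp add: adjoint_mat_def vec_eq_iff)

lemma adjoint_mat_one: "adjoint_mat (mat 1) = mat 1"
  by (simp add: adjoint_mat_def vec_eq_iff mat_def)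

lemma born_prob_outer: "born_prob \<psi> (outer u u) = (cmod (qinner u \<psi>))\<^sup>2"
  by (simp add: born_prob_def outer_mult_vector qinner_scale_right qinner_commute[of \<psi> u]
      complex_mult_cnj cmod_power2)

definition orthonormal_family :: "'i set \<Rightarrow> ('i \<Rightarrow> complex ^ 'n) \<Rightarrow> bool" where
  "orthonormal_family I u \<longleftrightarrow> (\<forall>i\<in>I. \<forall>j\<in>I. qinner (u i) (u j) = (if i = j then 1 else 0))"

definition completed_measurement :: "'i set \<Rightarrow> ('i \<Rightarrow> complex ^ 'n) \<Rightarrow> (complex ^ 'n ^ 'n) set"
  where "completed_measurement I u =
    insert (mat 1 - (\<Sum>i\<in>I. outer (u i) (u i))) ((\<lambda>i. outer (u i) (u i)) ` I)"

lemma projective_measurement_completed_measurement: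
  assumes I: "finite I" and onf: "orthonormal_family I u"
  shows "projective_measurement (completed_measurement I u)"
proof -
  define P where "P i = outer (u i) (u i)" for i
  define Q where "Q = mat 1 - (\<Sum>i\<in>I. P i)"
  have PP: "P i ** P j = (if i = j then P i else 0)" if "i \<in> I" "j \<in> I" for i j
    using onf that by (simp add: orthonormal_family_def P_def outer_mult)
  have SP: "(\<Sum>i\<in>I. P i) ** P j = P j" "P j ** (\<Sum>i\<in>I. P i) = P j" if "j \<in> I" for j
    using that I by (simp_all add: matrix_mult_sum_left matrix_mult_sum_right PP if_distrib
        sum.delta sum.delta' cong: if_cong)
  have QP: "Q ** P j = 0" "P j ** Q = 0" if "j \<in> I" for j
    using SP[OF that] by (simp_all add: Q_def matrix_mult_diff_left matrix_mult_diff_right)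
  have QQ: "Q ** Q = Q"
    by (simp add: Q_def matrix_mult_diff_left matrix_mult_diff_right matrix_mult_sum_right SP
        cong: sum.cong)
  have P_nonzero: "P i \<noteq> 0" if "i \<in> I" for i
  proof -
    have "P i *v u i = u i" "u i \<noteq> 0"
      using onf that by (force simp: orthonormal_family_def P_def outer_mult_vector)+
    then show ?thesis
      by auto
  qed
  have inj: "inj_on P I"
    using PP P_nonzero by (metis inj_onI)
  have Q_notin: "Q \<notin> P ` I"
    using QP PP P_nonzero by force
  have M: "completed_measurement I u = insert Q (P ` I)"
    by (simp add: completed_measurement_def Q_def P_def[abs_def])
  have "(\<Sum>R\<in>insert Q (P ` I). R) = mat 1"
    using I Q_notin inj by (simp add: sum.reindex Q_def)
  moreover have "orth_projector R" if "R \<in> insert Q (P ` I)" for R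
    using that PP QQ
    by (auto simp: orth_projector_def Q_def P_def adjoint_mat_diff adjoint_mat_sum
        adjoint_mat_one adjoint_outer_self)
  moreover have "R ** R' = 0" if "R \<in> insert Q (P ` I)" "R' \<in> insert Q (P ` I)" "R \<noteq> R'" for R R'
    using that PP QP by auto
  ultimately show ?thesis
    using I by (simp add: projective_measurement_def M)
qed

lemma born_prob_complement:
  "born_prob \<psi> (mat 1 - (\<Sum>i\<in>I. outer (u i) (u i)))
     = Re (qinner \<psi> \<psi>) - (\<Sum>i\<in>I. (cmod (qinner (u i) \<psi>))\<^sup>2)"
  by (simp add: born_prob_def matrix_vector_mult_diff_rdistrib matrix_vector_mult_sum_left
      qinner_diff_right qinner_sum_right flip: born_prob_outer)

text \<open>Vectors of \<open>\<real>\<^sup>4\<close> are encoded as lists; only the first four entries are read.\<close>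

definition dot :: "real list \<Rightarrow> real list \<Rightarrow> real" where
  "dot v w = v!0 * w!0 + v!1 * w!1 + v!2 * w!2 + v!3 * w!3"

lemma dot_self_nonneg: "0 \<le> dot v v"
  by (simp add: dot_def)

text \<open>\<open>W\<close> is an orthogonal basis of a subspace containing \<open>v1\<close> (the last clause is Parseval's
  identity), so \<open>v1\<close> never triggers the outcome projecting onto the complement of that subspace.\<close>

definition antidistinguishing_basis :: "real list set \<Rightarrow> real list \<Rightarrow> real list \<Rightarrow> real list \<Rightarrow> bool"
  where "antidistinguishing_basis W v1 v2 v3 \<longleftrightarrow> finite W
    \<and> (\<forall>w\<in>W. 0 < dot w w \<and> (dot w v1 = 0 \<or> dot w v2 = 0 \<or> dot w v3 = 0))
    \<and> (\<forall>w\<in>W. \<forall>w'\<in>W. w \<noteq> w' \<longrightarrow> dot w w' = 0)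
    \<and> (\<Sum>w\<in>W. (dot w v1)\<^sup>2 / dot w w) = dot v1 v1"

definition basis4 :: "real list set" where
  "basis4 = {[1,0,0,0], [0,1,0,0], [0,0,1,0], [0,0,0,1]}"

definition hadamard4 :: "real list set" where
  "hadamard4 = {[1,1,1,1], [1,-1,1,-1], [1,1,-1,-1], [1,-1,-1,1]}"

text \<open>In each basis two vectors are orthogonal to the standard basis vector, one to the Hadamard
  vector and one to \<open>[1,1,1,-1]\<close>.\<close>

lemma antidistinguishing_bases:
  "antidistinguishing_basis {[0,0,1,0],[0,1,0,0],[1,0,0,-1],[1,0,0,1]} [1,1,1,-1] [1,0,0,0] [1,1,1,1]"
  "antidistinguishing_basis {[0,0,0,1],[0,0,1,0],[1,-1,0,0],[1,1,0,0]} [1,1,1,-1] [1,0,0,0] [1,-1,1,-1]"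
  "antidistinguishing_basis {[0,0,0,1],[0,1,0,0],[1,0,-1,0],[1,0,1,0]} [1,1,1,-1] [1,0,0,0] [1,1,-1,-1]"
  "antidistinguishing_basis {[0,0,0,1],[0,0,1,0],[1,-1,0,0],[1,1,0,0]} [1,1,1,-1] [1,0,0,0] [1,-1,-1,1]"
  "antidistinguishing_basis {[0,0,1,0],[0,1,0,-1],[0,1,0,1],[1,0,0,0]} [1,1,1,-1] [0,1,0,0] [1,1,1,1]"
  "antidistinguishing_basis {[0,0,0,1],[0,0,1,0],[1,-1,0,0],[1,1,0,0]} [1,1,1,-1] [0,1,0,0] [1,-1,1,-1]"
  "antidistinguishing_basis {[0,0,0,1],[0,1,-1,0],[0,1,1,0],[1,0,0,0]} [1,1,1,-1] [0,1,0,0] [1,1,-1,-1]"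
  "antidistinguishing_basis {[0,0,0,1],[0,0,1,0],[1,-1,0,0],[1,1,0,0]} [1,1,1,-1] [0,1,0,0] [1,-1,-1,1]"
  "antidistinguishing_basis {[0,0,1,-1],[0,0,1,1],[0,1,0,0],[1,0,0,0]} [1,1,1,-1] [0,0,1,0] [1,1,1,1]"
  "antidistinguishing_basis {[0,0,0,1],[0,1,-1,0],[0,1,1,0],[1,0,0,0]} [1,1,1,-1] [0,0,1,0] [1,-1,1,-1]"
  "antidistinguishing_basis {[0,0,0,1],[0,1,-1,0],[0,1,1,0],[1,0,0,0]} [1,1,1,-1] [0,0,1,0] [1,1,-1,-1]"
  "antidistinguishing_basis {[0,0,0,1],[0,1,0,0],[1,0,-1,0],[1,0,1,0]} [1,1,1,-1] [0,0,1,0] [1,-1,-1,1]"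
  "antidistinguishing_basis {[0,0,1,-1],[0,0,1,1],[0,1,0,0],[1,0,0,0]} [1,1,1,-1] [0,0,0,1] [1,1,1,1]"
  "antidistinguishing_basis {[0,0,1,0],[0,1,0,-1],[0,1,0,1],[1,0,0,0]} [1,1,1,-1] [0,0,0,1] [1,-1,1,-1]"
  "antidistinguishing_basis {[0,0,1,-1],[0,0,1,1],[0,1,0,0],[1,0,0,0]} [1,1,1,-1] [0,0,0,1] [1,1,-1,-1]"
  "antidistinguishing_basis {[0,0,1,0],[0,1,0,0],[1,0,0,-1],[1,0,0,1]} [1,1,1,-1] [0,0,0,1] [1,-1,-1,1]"
  by (simp_all add: antidistinguishing_basis_def dot_def)

lemma basis_hadamard_pairs_orthogonal_or_antidistinguishable:
  assumes "v \<in> basis4 \<union> hadamard4" "v' \<in> basis4 \<union> hadamard4" "v \<noteq> v'"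
  shows "dot v v' = 0 \<or> (\<exists>W. antidistinguishing_basis W [1,1,1,-1] v v')
    \<or> (\<exists>W. antidistinguishing_basis W [1,1,1,-1] v' v)"
  using assms antidistinguishing_bases
  by (auto simp: basis4_def hadamard4_def dot_def)

context
  fixes a b c d :: "'n::finite"
  assumes distinct: "distinct [a, b, c, d]"
begin

definition embed :: "real list \<Rightarrow> 'n \<Rightarrow> real" where
  "embed v i = (if i = a then v!0 else if i = b then v!1 else if i = c then v!2
     else if i = d then v!3 else 0)"

definition state :: "real list \<Rightarrow> complex ^ 'n" where
  "state v = (\<chi> i. complex_of_real (embed v i / sqrt (dot v v)))"

lemma qinner_state:
  "qinner (state v) (state w) = complex_of_real (dot v w / sqrt (dot v v * dot w w))"
proof -
  have "qinner (state v) (state w)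
      = complex_of_real ((\<Sum>i\<in>UNIV. embed v i * embed w i) / sqrt (dot v v * dot w w))"
    by (simp add: qinner_def state_def real_sqrt_mult sum_divide_distrib)
  also have "(\<Sum>i\<in>UNIV. embed v i * embed w i) = (\<Sum>i\<in>{a, b, c, d}. embed v i * embed w i)"
    by (rule sum.mono_neutral_right) (auto simp: embed_def)
  also have "\<dots> = dot v w"
    using distinct by (simp add: embed_def dot_def eq_commute)
  finally show ?thesis .
qed

lemma pure_state_state: "0 < dot v v \<Longrightarrow> pure_state (state v)"
  by (simp add: pure_state_def qinner_state)

lemma cmod_qinner_state_sq:
  "(cmod (qinner (state v) (state w)))\<^sup>2 = (dot v w)\<^sup>2 / (dot v v * dot w w)"
  by (simp add: qinner_state power_divide dot_self_nonneg del: of_real_divide)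

lemma antidistinguishes_state:
  assumes W: "antidistinguishing_basis W v1 v2 v3" and v1: "0 < dot v1 v1"
  shows "projective_measurement (completed_measurement W state)"
    and "antidistinguishes (completed_measurement W state) (state v1) (state v2) (state v3)"
proof -
  have "orthonormal_family W state"
    using W by (auto simp: orthonormal_family_def antidistinguishing_basis_def qinner_state
        real_sqrt_mult[symmetric])
  then show "projective_measurement (completed_measurement W state)"
    using W by (simp add: projective_measurement_completed_measurement antidistinguishing_basis_def)
  have "(\<Sum>w\<in>W. (cmod (qinner (state w) (state v1)))\<^sup>2)
      = (\<Sum>w\<in>W. (dot w v1)\<^sup>2 / dot w w) / dot v1 v1"
    by (simp add: cmod_qinner_state_sq sum_divide_distrib divide_divide_eq_left)
  also have "\<dots> = 1"
    using W v1 by (simp add: antidistinguishing_basis_def)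
  finally have "born_prob (state v1) (mat 1 - (\<Sum>w\<in>W. outer (state w) (state w))) = 0"
    using pure_state_state[OF v1] by (simp add: born_prob_complement pure_state_def)
  then show "antidistinguishes (completed_measurement W state) (state v1) (state v2) (state v3)"
    using W by (auto simp: antidistinguishes_def completed_measurement_def born_prob_outer
        cmod_qinner_state_sq antidistinguishing_basis_def)
qed

lemma no_maximally_psi_epistemic_model:
  fixes \<mu> :: "complex ^ 'n \<Rightarrow> 'l \<Rightarrow> real"
  assumes om: "ontological_model L \<mu> \<xi>" and rq: "reproduces_quantum L \<mu> \<xi>"
    and me: "maximally_psi_epistemic L \<mu>"
  shows False
proof -
  define S where "S = basis4 \<union> hadamard4"
  define \<psi> where "\<psi> = state [1,1,1,-1]"
  have pure: "pure_state (state v)" if "v \<in> S" for v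
    using that by (auto simp: S_def basis4_def hadamard4_def dot_def intro!: pure_state_state)
  have pure_\<psi>: "pure_state \<psi>"
    by (simp add: \<psi>_def pure_state_state dot_def)
  have triple: "AE x in L. min (\<mu> \<psi> x) (min (\<mu> (state v) x) (\<mu> (state v') x)) = 0"
    if "v \<in> S" "v' \<in> S" "v \<noteq> v'" for v v'
    using basis_hadamard_pairs_orthogonal_or_antidistinguishable[OF that[unfolded S_def]]
  proof (elim disjE exE)
    assume "dot v v' = 0"
    then have "AE x in L. min (\<mu> (state v) x) (\<mu> (state v') x) = 0"
      using pure that by (intro AE_min_density_zero_if_orthogonal[OF om me]) (simp_all add: qinner_state)
    moreover have "AE x in L. 0 \<le> \<mu> \<psi> x"
      using om pure_\<psi> by (intro AE_I2) (auto simp: ontological_model_def)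
    ultimately show ?thesis
      by eventually_elim simp
  next
    fix W assume "antidistinguishing_basis W [1,1,1,-1] v v'"
    from antidistinguishes_state[OF this] show ?thesis
      unfolding \<psi>_def using pure_\<psi>[unfolded \<psi>_def] pure that
      by (intro AE_min3_density_zero_if_antidistinguishes[OF om rq]) (simp_all add: dot_def)
  next
    fix W assume "antidistinguishing_basis W [1,1,1,-1] v' v"
    from antidistinguishes_state[OF this]
    have "AE x in L. min (\<mu> \<psi> x) (min (\<mu> (state v') x) (\<mu> (state v) x)) = 0"
      unfolding \<psi>_def using pure_\<psi>[unfolded \<psi>_def] pure that
      by (intro AE_min3_density_zero_if_antidistinguishes[OF om rq]) (simp_all add: dot_def)
    then show ?thesis
      by (rule eventually_mono) (simp add: min.commute)
  qed
  have "(\<Sum>v\<in>S. classical_overlap L (\<mu> \<psi>) (\<mu> (state v))) \<le> 1"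
    using pure triple
    by (intro sum_classical_overlap_le_one[OF om pure_\<psi>]) (simp_all add: S_def basis4_def hadamard4_def)
  moreover have "classical_overlap L (\<mu> \<psi>) (\<mu> (state v)) = 1 - sqrt (3/4)" if "v \<in> S" for v
  proof -
    have "(cmod (qinner \<psi> (state v)))\<^sup>2 = 1/4"
      using that by (auto simp: \<psi>_def cmod_qinner_state_sq S_def basis4_def hadamard4_def dot_def)
    then show ?thesis
      using me pure_\<psi> pure[OF that] by (simp add: maximally_psi_epistemic_def quantum_overlap_def)
  qed
  moreover have "card S = 8"
    by (simp add: S_def basis4_def hadamard4_def)
  ultimately have "8 * (1 - sqrt (3/4)) \<le> (1::real)"
    by simp
  moreover have "sqrt (3/4) < sqrt ((7/8)\<^sup>2 :: real)" \<comment> \<open>\<open>48 < 49\<close>\<close>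
    by (simp add: power2_eq_square)
  ultimately show False
    by simp
qed

end

lemma exists_distinct4:
  assumes "CARD('n) \<ge> 4"
  obtains a b c d :: "'n::finite" where "distinct [a, b, c, d]"
proof -
  obtain T :: "'n set" where "card T = 4"
    using obtain_subset_with_card_n[OF assms] by blast
  then show ?thesis
    using that by (auto simp: card_Suc_eq numeral_eq_Suc)
qed

theorem corollary1:
  fixes L :: "'l measure"
  assumes "CARD('n::finite) \<ge> 4"
  shows "\<not> (\<exists>(\<mu> :: complex ^ 'n \<Rightarrow> 'l \<Rightarrow> real) \<xi>.
            ontological_model L \<mu> \<xi> \<and> reproduces_quantum L \<mu> \<xi>
            \<and> maximally_psi_epistemic L \<mu>)"
proof
  assume "\<exists>(\<mu> :: complex ^ 'n \<Rightarrow> 'l \<Rightarrow> real) \<xi>.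
            ontological_model L \<mu> \<xi> \<and> reproduces_quantum L \<mu> \<xi>
            \<and> maximally_psi_epistemic L \<mu>"
  then obtain \<mu> :: "complex ^ 'n \<Rightarrow> 'l \<Rightarrow> real" and \<xi> where
    "ontological_model L \<mu> \<xi>" "reproduces_quantum L \<mu> \<xi>" "maximally_psi_epistemic L \<mu>"
    by blast
  moreover obtain a b c d :: 'n where "distinct [a, b, c, d]"
    using exists_distinct4[OF assms] .
  ultimately show False
    using no_maximally_psi_epistemic_model by blast
qed

end
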